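(* Fix constants $\lambda_1,\ldots,\lambda_K\ge 0$ and $\Gamma^{\rm ST}_1,\ldots,\Gamma^{\rm ST}_M>0$. For a channel realization $\boldsymbol{\alpha}$ consider the problem $$\max_{p_1,\ldots,p_K}\ \log\Big(1+\sum_{k=1}^K h_kp_k\Big)-\sum_{k=1}^K\lambda_kp_k\quad\text{s.t.}\quad \sum_{k=1}^K g_{km}p_k\le\Gamma_m^{\rm ST}\ \ \forall m,\qquad p_k\ge 0\ \ \forall k.$$ For almost every realization $\boldsymbol{\alpha}$: this problem has an optimal solution in which at most one user (user $i$) has positive power and all other users have zero power if and only if there is a user $i$ which, with $m'=\arg\min_{m\in\{1,\ldots,M\}}\Gamma_m^{\rm ST}/g_{im}$, satisfies one of the following two sets of conditions: (a) $\frac{1}{\lambda_i}-\frac{1}{h_i}\le\frac{\Gamma_{m'}^{\rm ST}}{g_{im'}}$ and $\frac{h_i}{\lambda_i}\ge\frac{h_j}{\lambda_j}$ for all $j\ne i$; in this case the optimal power of user $i$ is $p_i^*=\big(\frac{1}{\lambda_i}-\frac{1}{h_i}\big)^+$; (b) $\frac{1}{\lambda_i}-\frac{1}{h_i}>\frac{\Gamma_{m'}^{\rm ST}}{g_{im'}}$ and $\left(h_jg_{im'}-h_ig_{jm'}\right)\frac{g_{im'}}{g_{im'}+h_i\Gamma_{m'}^{\rm ST}}\le \lambda_jg_{im'}-\lambda_ig_{jm'}$ for all $j\neq i$; in this case $p_i^*=\frac{\Gamma_{m'}^{\rm ST}}{g_{im'}}$.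
   Context: $\boldsymbol{\alpha}=(h_1,\ldots,h_K,g_{11},\ldots,g_{KM})$ is a random vector of nonnegative channel power gains ($h_k$: secondary user $k$ to secondary base station; $g_{km}$: secondary user $k$ to primary receiver $m$) with a continuous, differentiable joint cumulative distribution function, the $h_k$'s and $g_{km}$'s being independent. This per-fading-state problem arises (with $\lambda_k$ the Lagrange multipliers of long-term transmit-power constraints) in maximizing the ergodic sum rate of the fading cognitive multiple-access channel under long-term transmit-power and short-term interference-power constraints. Convention: $1/0=+\infty$ and $x/0=+\infty$ for $x>0$. $(x)^+=\max(0,x)$. *)

theory Defs
  imports "HOL-Probability.Probability"
begin

text \<open>Extended-real division with the paper's convention x/0 = +infinity for x > 0
  (in particular 1/0 = +infinity). The case 0/0 only arises on a null set of channel
  realizations and is fixed arbitrarily to 0.\<close>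
definition ediv :: "real \<Rightarrow> real \<Rightarrow> ereal" where
  "ediv x y = (if y = 0 then (if x > 0 then \<infinity> else 0) else ereal (x / y))"

definition einv :: "real \<Rightarrow> ereal" where
  "einv x = ediv 1 x"

definition obj :: "real^'k \<Rightarrow> ('k::finite \<Rightarrow> real) \<Rightarrow> ('k \<Rightarrow> real) \<Rightarrow> real" where
  "obj h lam p = ln (1 + (\<Sum>k\<in>UNIV. h $ k * p k)) - (\<Sum>k\<in>UNIV. lam k * p k)"

definition feasible :: "real^'m^'k \<Rightarrow> ('m::finite \<Rightarrow> real) \<Rightarrow> ('k::finite \<Rightarrow> real) \<Rightarrow> bool" where
  "feasible g Gam p \<longleftrightarrow> (\<forall>k. p k \<ge> 0) \<and> (\<forall>m. (\<Sum>k\<in>UNIV. g $ k $ m * p k) \<le> Gam m)"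

definition optimal :: "real^'k \<Rightarrow> real^'m^'k \<Rightarrow> ('k::finite \<Rightarrow> real) \<Rightarrow> ('m::finite \<Rightarrow> real)
    \<Rightarrow> ('k \<Rightarrow> real) \<Rightarrow> bool" where
  "optimal h g lam Gam p \<longleftrightarrow> feasible g Gam p \<and> (\<forall>q. feasible g Gam q \<longrightarrow> obj h lam q \<le> obj h lam p)"

definition single :: "'k \<Rightarrow> real \<Rightarrow> 'k \<Rightarrow> real" where
  "single i c = (\<lambda>k. if k = i then c else 0)"

definition is_argmin_ratio :: "real^'m^'k \<Rightarrow> ('m::finite \<Rightarrow> real) \<Rightarrow> 'k::finite \<Rightarrow> 'm \<Rightarrow> bool" where
  "is_argmin_ratio g Gam i m' \<longleftrightarrow> (\<forall>m. ediv (Gam m') (g $ i $ m') \<le> ediv (Gam m) (g $ i $ m))"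

definition condA :: "real^'k \<Rightarrow> real^'m^'k \<Rightarrow> ('k::finite \<Rightarrow> real) \<Rightarrow> ('m::finite \<Rightarrow> real) \<Rightarrow> 'k \<Rightarrow> 'm \<Rightarrow> bool" where
  "condA h g lam Gam i m' \<longleftrightarrow>
     einv (lam i) - einv (h $ i) \<le> ediv (Gam m') (g $ i $ m') \<and>
     (\<forall>j. j \<noteq> i \<longrightarrow> ediv (h $ i) (lam i) \<ge> ediv (h $ j) (lam j))"

definition condB :: "real^'k \<Rightarrow> real^'m^'k \<Rightarrow> ('k::finite \<Rightarrow> real) \<Rightarrow> ('m::finite \<Rightarrow> real) \<Rightarrow> 'k \<Rightarrow> 'm \<Rightarrow> bool" where
  "condB h g lam Gam i m' \<longleftrightarrow>
     einv (lam i) - einv (h $ i) > ediv (Gam m') (g $ i $ m') \<and>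
     (\<forall>j. j \<noteq> i \<longrightarrow>
        (h $ j * g $ i $ m' - h $ i * g $ j $ m') * (g $ i $ m' / (g $ i $ m' + h $ i * Gam m'))
          \<le> lam j * g $ i $ m' - lam i * g $ j $ m')"

end

theory Submission
  imports Defs
begin

text \<open>The objective is concave, so a feasible power vector p is optimal iff the directional
  derivative of the objective at p is nonpositive along every feasible direction; the partial
  derivatives are h_k / (1 + h \<cdot> p) - \<lambda>_k. For a single active user i with power c the
  feasible directions are explicit: if c is below the tightest interference cap
  \<Gamma>_m'/g_im', every user may increase its power, which yields condition (a) with
  c = 1/\<lambda>_i - 1/h_i (or c = 0 and user i maximising h_i/\<lambda>_i); if c sits on the cap, only
  exchanges of power of user j against g_jm'/g_im' units of power of user i are available,
  and these yield condition (b). Conversely the same inequalities show that the first-order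
  condition holds at the announced power vectors. For almost every channel realisation all
  gains are positive and the minimiser m' is unique, because the exceptional sets lie in
  finitely many hyperplanes.\<close>

definition signal :: "real^'k \<Rightarrow> ('k::finite \<Rightarrow> real) \<Rightarrow> real" where
  "signal h p = 1 + (\<Sum>k\<in>UNIV. h $ k * p k)"

definition marginal :: "real^'k \<Rightarrow> ('k::finite \<Rightarrow> real) \<Rightarrow> ('k \<Rightarrow> real) \<Rightarrow> 'k \<Rightarrow> real" where
  "marginal h lam p k = h $ k / signal h p - lam k"

definition admissible_dir :: "real^'m^'k \<Rightarrow> ('m::finite \<Rightarrow> real) \<Rightarrow> ('k::finite \<Rightarrow> real)
    \<Rightarrow> ('k \<Rightarrow> real) \<Rightarrow> bool" where
  "admissible_dir g Gam p d \<longleftrightarrow> (\<forall>k. d k \<ge> 0 \<or> p k > 0) \<and>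
     (\<forall>m. (\<Sum>k\<in>UNIV. g $ k $ m * p k) < Gam m \<or> (\<Sum>k\<in>UNIV. g $ k $ m * d k) \<le> 0)"

lemma signal_ge_1: "(\<And>k. h $ k \<ge> 0) \<Longrightarrow> (\<And>k. p k \<ge> 0) \<Longrightarrow> signal h p \<ge> 1"
  unfolding signal_def by (simp add: sum_nonneg)

lemma sum_marginal_mult:
  "(\<Sum>k\<in>UNIV. marginal h lam p k * d k) =
     (\<Sum>k\<in>UNIV. h $ k * d k) / signal h p - (\<Sum>k\<in>UNIV. lam k * d k)"
  unfolding marginal_def by (simp add: left_diff_distrib sum_subtractf sum_divide_distrib)

lemma optimal_if_marginal_nonpos:
  assumes h_nonneg: "\<And>k. h $ k \<ge> 0" and feas: "feasible g Gam p"
    and first_order: "\<And>q. feasible g Gam q \<Longrightarrow> (\<Sum>k\<in>UNIV. marginal h lam p k * (q k - p k)) \<le> 0"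
  shows "optimal h g lam Gam p"
  unfolding optimal_def
proof (intro conjI allI impI feas)
  fix q assume feas_q: "feasible g Gam q"
  have sp: "signal h p \<ge> 1" and sq: "signal h q \<ge> 1"
    using feas feas_q by (auto simp: feasible_def intro!: signal_ge_1 h_nonneg)
  have "ln (signal h q) - ln (signal h p) = ln (signal h q / signal h p)"
    using sp sq by (simp add: ln_div)
  also have "\<dots> \<le> signal h q / signal h p - 1"
    using sp sq by (intro ln_le_minus_one) simp
  also have "\<dots> = (\<Sum>k\<in>UNIV. h $ k * (q k - p k)) / signal h p"
    using sp by (simp add: signal_def field_simps right_diff_distrib sum_subtractf)
  finally have "ln (signal h q) - ln (signal h p) \<le> (\<Sum>k\<in>UNIV. h $ k * (q k - p k)) / signal h p" .
  moreover have "(\<Sum>k\<in>UNIV. h $ k * (q k - p k)) / signal h p - (\<Sum>k\<in>UNIV. lam k * (q k - p k)) \<le> 0"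
    using first_order[OF feas_q] by (simp add: sum_marginal_mult)
  ultimately show "obj h lam q \<le> obj h lam p"
    unfolding obj_def signal_def[symmetric] by (simp add: right_diff_distrib sum_subtractf)
qed

lemma optimal_if_kkt:
  assumes h_nonneg: "\<And>k. h $ k \<ge> 0" and feas: "feasible g Gam p" and "\<nu> \<ge> 0"
    and dual: "\<And>k. marginal h lam p k \<le> \<nu> * g $ k $ m"
    and compl: "\<And>k. p k * marginal h lam p k = p k * (\<nu> * g $ k $ m)"
    and cap: "\<nu> * (\<Sum>k\<in>UNIV. g $ k $ m * p k) = \<nu> * Gam m"
  shows "optimal h g lam Gam p"
proof (rule optimal_if_marginal_nonpos[OF h_nonneg feas])
  fix q assume feas_q: "feasible g Gam q"
  have "(\<Sum>k\<in>UNIV. marginal h lam p k * (q k - p k)) =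
      (\<Sum>k\<in>UNIV. marginal h lam p k * q k) - (\<Sum>k\<in>UNIV. p k * marginal h lam p k)"
    by (simp add: sum_subtractf[symmetric] algebra_simps)
  also have "(\<Sum>k\<in>UNIV. p k * marginal h lam p k) = \<nu> * Gam m"
    using cap by (simp add: compl sum_distrib_left algebra_simps)
  also have "(\<Sum>k\<in>UNIV. marginal h lam p k * q k) \<le> (\<Sum>k\<in>UNIV. \<nu> * g $ k $ m * q k)"
    using feas_q by (intro sum_mono mult_right_mono dual) (simp add: feasible_def)
  also have "\<dots> = \<nu> * (\<Sum>k\<in>UNIV. g $ k $ m * q k)"
    by (simp add: sum_distrib_left mult.assoc)
  also have "\<dots> \<le> \<nu> * Gam m"
    using feas_q \<open>\<nu> \<ge> 0\<close> by (intro mult_left_mono) (simp_all add: feasible_def)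
  finally show "(\<Sum>k\<in>UNIV. marginal h lam p k * (q k - p k)) \<le> 0" by simp
qed

lemma eventually_at_right_affine_le:
  fixes a b c :: real
  assumes "a \<le> c" and "a < c \<or> b \<le> 0"
  shows "eventually (\<lambda>t. a + t * b \<le> c) (at_right 0)"
proof (cases "a < c")
  case True
  moreover have "((\<lambda>t. a + t * b) \<longlongrightarrow> a + 0 * b) (at_right 0)" by (intro tendsto_intros)
  ultimately have "eventually (\<lambda>t. a + t * b < c) (at_right 0)"
    using order_tendstoD(2) by fastforce
  thus ?thesis by eventually_elim simp
next
  case False
  with assms have "b \<le> 0" by simp
  show ?thesis using eventually_at_right_less[of 0]
    by eventually_elim (use \<open>b \<le> 0\<close> assms(1) in \<open>smt (verit) mult_nonneg_nonpos\<close>)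
qed

lemma eventually_feasible_if_admissible_dir:
  assumes feas: "feasible g Gam p" and adm: "admissible_dir g Gam p d"
  shows "eventually (\<lambda>t. feasible g Gam (\<lambda>k. p k + t * d k)) (at_right 0)"
proof -
  have nonneg: "eventually (\<lambda>t. p k + t * d k \<ge> 0) (at_right 0)" for k
  proof -
    have "eventually (\<lambda>t. - p k + t * - d k \<le> 0) (at_right 0)"
      using feas adm by (intro eventually_at_right_affine_le) (auto simp: feasible_def admissible_dir_def)
    thus ?thesis by eventually_elim simp
  qed
  have capped: "eventually (\<lambda>t. (\<Sum>k\<in>UNIV. g $ k $ m * (p k + t * d k)) \<le> Gam m) (at_right 0)" for m
  proof -
    have "eventually (\<lambda>t. (\<Sum>k\<in>UNIV. g $ k $ m * p k) + t * (\<Sum>k\<in>UNIV. g $ k $ m * d k) \<le> Gam m)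
        (at_right 0)"
      using feas adm by (intro eventually_at_right_affine_le) (auto simp: feasible_def admissible_dir_def)
    thus ?thesis by (simp add: algebra_simps sum.distrib sum_distrib_left)
  qed
  have "eventually (\<lambda>t. \<forall>k. p k + t * d k \<ge> 0) (at_right 0)"
    by (rule eventually_all_finite) (rule nonneg)
  moreover have "eventually (\<lambda>t. \<forall>m. (\<Sum>k\<in>UNIV. g $ k $ m * (p k + t * d k)) \<le> Gam m) (at_right 0)"
    by (rule eventually_all_finite) (rule capped)
  ultimately show ?thesis by eventually_elim (simp add: feasible_def)
qed

lemma marginal_dir_nonpos_if_optimal:
  assumes h_nonneg: "\<And>k. h $ k \<ge> 0" and opt: "optimal h g lam Gam p"
    and adm: "admissible_dir g Gam p d"
  shows "(\<Sum>k\<in>UNIV. marginal h lam p k * d k) \<le> 0"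
proof (rule ccontr)
  define s where "s = signal h p"
  define b where "b = (\<Sum>k\<in>UNIV. h $ k * d k)"
  define l where "l = (\<Sum>k\<in>UNIV. lam k * d k)"
  assume "\<not> ?thesis"
  hence "b / s - l > 0" by (simp add: sum_marginal_mult s_def b_def l_def)
  have feas: "feasible g Gam p" using opt by (simp add: optimal_def)
  have s_ge: "s \<ge> 1" using feas by (auto simp: feasible_def s_def intro!: signal_ge_1 h_nonneg)
  have "((\<lambda>t. b / (s + t * b) - l) \<longlongrightarrow> b / (s + 0 * b) - l) (at_right 0)"
    using s_ge by (intro tendsto_intros) auto
  hence "eventually (\<lambda>t. b / (s + t * b) - l > 0) (at_right 0)"
    using \<open>b / s - l > 0\<close> order_tendstoD(1) by fastforce
  moreover have "eventually (\<lambda>t::real. t > 0) (at_right 0)" by (simp add: eventually_at_right_less)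
  moreover note eventually_feasible_if_admissible_dir[OF feas adm]
  ultimately have "eventually (\<lambda>t. False) (at_right (0::real))"
  proof eventually_elim
    case (elim t)
    let ?q = "\<lambda>k. p k + t * d k"
    have sq_ge: "signal h ?q \<ge> 1"
      using elim(3) by (auto simp: feasible_def intro!: signal_ge_1 h_nonneg)
    have sq: "signal h ?q = s + t * b"
      by (simp add: signal_def s_def b_def algebra_simps sum.distrib sum_distrib_left)
    have lq: "(\<Sum>k\<in>UNIV. lam k * ?q k) = (\<Sum>k\<in>UNIV. lam k * p k) + t * l"
      by (simp add: l_def algebra_simps sum.distrib sum_distrib_left)
    \<comment> \<open>the chord of ln from s to s + t b already rises faster than the linear cost t l\<close>
    have "ln (s / signal h ?q) \<le> s / signal h ?q - 1"
      using s_ge sq_ge by (intro ln_le_minus_one) simp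
    hence "ln (signal h ?q) - ln s \<ge> 1 - s / (s + t * b)"
      using s_ge sq_ge sq by (simp add: ln_div)
    also have "1 - s / (s + t * b) = t * (b / (s + t * b))"
      using sq_ge sq by (simp add: field_simps)
    finally have "ln (signal h ?q) - ln s - t * l \<ge> t * (b / (s + t * b) - l)"
      by (simp add: right_diff_distrib)
    moreover have "t * (b / (s + t * b) - l) > 0" using elim by simp
    ultimately have "obj h lam ?q > obj h lam p"
      unfolding obj_def using lq by (simp add: signal_def[symmetric] s_def)
    moreover have "obj h lam ?q \<le> obj h lam p" using opt elim(3) by (simp add: optimal_def)
    ultimately show False by simp
  qed
  thus False by (simp add: trivial_limit_at_right_real)
qed

lemma sum_mult_single: "(\<Sum>k\<in>UNIV. f k * single (i::'k::finite) c k) = f i * c"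
proof -
  have "(\<Sum>k\<in>UNIV. f k * single i c k) = (\<Sum>k\<in>UNIV. if k = i then f i * c else 0)"
    by (rule sum.cong) (auto simp: single_def)
  thus ?thesis by simp
qed

lemma sum_mult_single_add:
  "(\<Sum>k\<in>UNIV. f k * (single j a k + single i b k)) = f j * a + f (i::'k::finite) * b"
  by (simp add: distrib_left sum.distrib sum_mult_single)

lemma signal_single: "signal h (single i c) = 1 + h $ i * c"
  by (simp add: signal_def sum_mult_single)

lemma card_pos_single_le_1: "card {k::'k::finite. single i c k > 0} \<le> 1"
proof -
  have "card {k. single i c k > 0} \<le> card {i}"
    by (intro card_mono) (auto simp: single_def split: if_splits)
  thus ?thesis by simp
qed

lemma single_if_card_pos_le_1:
  fixes p :: "'k::finite \<Rightarrow> real"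
  assumes "\<And>k. p k \<ge> 0" and "card {k. p k > 0} \<le> 1" and "p i > 0"
  shows "p = single i (p i)"
proof
  fix j show "p j = single i (p i) j"
  proof (cases "j = i")
    case False
    have "\<not> p j > 0"
    proof
      assume "p j > 0"
      hence "card {i, j} \<le> card {k. p k > 0}" using \<open>p i > 0\<close> by (intro card_mono) auto
      thus False using assms(2) False by simp
    qed
    thus ?thesis using assms(1)[of j] False by (simp add: single_def)
  qed (simp add: single_def)
qed

locale positive_channel =
  fixes h :: "real^'k::finite" and g :: "real^'m::finite^'k"
    and lam :: "'k \<Rightarrow> real" and Gam :: "'m \<Rightarrow> real"
  assumes h_pos: "h $ k > 0" and g_pos: "g $ k $ m > 0"
    and lam_nonneg: "lam k \<ge> 0" and Gam_pos: "Gam m > 0"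
begin

lemma h_nonneg: "h $ k \<ge> 0"
  using h_pos less_imp_le by blast

lemma is_argmin_ratio_iff:
  "is_argmin_ratio g Gam i m' \<longleftrightarrow> (\<forall>m. Gam m' / g $ i $ m' \<le> Gam m / g $ i $ m)"
  using g_pos by (simp add: is_argmin_ratio_def ediv_def less_imp_neq[symmetric])

lemma ex_argmin_ratio: "\<exists>m'. is_argmin_ratio g Gam i m'"
  unfolding is_argmin_ratio_iff
  using arg_min_least[where f = "\<lambda>m. Gam m / g $ i $ m" and S = UNIV] by auto

text \<open>With \<lambda>_i = 0 the extended real 1/\<lambda>_i is \<infinity>, so condition (a) fails and the first
  part of condition (b) holds.\<close>
lemma condA_iff:
  "condA h g lam Gam i m' \<longleftrightarrow> lam i > 0 \<and> 1 / lam i - 1 / h $ i \<le> Gam m' / g $ i $ m'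
     \<and> (\<forall>j. h $ j * lam i \<le> lam j * h $ i)"
proof (cases "lam i = 0")
  case True
  then show ?thesis
    using h_pos[of i] g_pos[of i m'] by (simp add: condA_def einv_def ediv_def)
next
  case False
  hence lam_i: "lam i > 0" using lam_nonneg[of i] by simp
  have "ediv (h $ j) (lam j) \<le> ediv (h $ i) (lam i) \<longleftrightarrow> h $ j * lam i \<le> lam j * h $ i" for j
  proof (cases "lam j = 0")
    case True
    then show ?thesis using h_pos[of j] h_pos[of i] lam_i by (simp add: ediv_def not_le)
  next
    case False
    hence "lam j > 0" using lam_nonneg[of j] by simp
    then show ?thesis using lam_i by (simp add: ediv_def divide_simps mult.commute)
  qed
  moreover have "(\<forall>j. j \<noteq> i \<longrightarrow> h $ j * lam i \<le> lam j * h $ i) \<longleftrightarrow>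
      (\<forall>j. h $ j * lam i \<le> lam j * h $ i)"
    by (metis mult.commute order_refl)
  ultimately show ?thesis
    using lam_i h_pos[of i] g_pos[of i m'] by (simp add: condA_def einv_def ediv_def)
qed

lemma condB_iff_marginal:
  fixes i :: 'k and m' :: 'm
  defines "p \<equiv> single i (Gam m' / g $ i $ m')"
  shows "condB h g lam Gam i m' \<longleftrightarrow> marginal h lam p i > 0 \<and>
     (\<forall>j. marginal h lam p j * g $ i $ m' \<le> marginal h lam p i * g $ j $ m')"
proof -
  define G where "G = g $ i $ m'"
  have G_pos: "G > 0" and h_i: "h $ i > 0" using g_pos h_pos by (simp_all add: G_def)
  have s: "signal h p = 1 + h $ i * (Gam m' / G)" by (simp add: p_def signal_single G_def)
  have s_pos: "signal h p > 0"
    using s h_i G_pos Gam_pos[of m'] by (simp add: add_pos_pos)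
  have ratio: "G / (G + h $ i * Gam m') = 1 / signal h p"
    using G_pos h_i Gam_pos[of m'] by (simp add: s field_simps)
  have power_clause: "einv (lam i) - einv (h $ i) > ediv (Gam m') G \<longleftrightarrow> marginal h lam p i > 0"
  proof (cases "lam i = 0")
    case True
    then show ?thesis using h_i s_pos G_pos by (simp add: einv_def ediv_def marginal_def)
  next
    case False
    hence lam_i: "lam i > 0" using lam_nonneg[of i] by simp
    have "1 / lam i - 1 / h $ i > Gam m' / G \<longleftrightarrow> 1 / lam i > signal h p / h $ i"
      using h_i by (simp add: s field_simps)
    also have "\<dots> \<longleftrightarrow> h $ i / signal h p > lam i"
      using lam_i h_i s_pos by (simp add: field_simps)
    finally show ?thesis using lam_i h_i G_pos by (simp add: einv_def ediv_def marginal_def)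
  qed
  have tradeoff_clause:
    "(h $ j * G - h $ i * g $ j $ m') * (G / (G + h $ i * Gam m')) \<le> lam j * G - lam i * g $ j $ m'
      \<longleftrightarrow> marginal h lam p j * G \<le> marginal h lam p i * g $ j $ m'" for j
    unfolding ratio by (simp add: marginal_def algebra_simps)
  show ?thesis
    unfolding condB_def G_def[symmetric] power_clause tradeoff_clause by (metis G_def order_refl)
qed

lemma feasible_single:
  assumes "is_argmin_ratio g Gam i m'" and "0 \<le> c" and "c \<le> Gam m' / g $ i $ m'"
  shows "feasible g Gam (single i c)"
  unfolding feasible_def
proof (intro conjI allI)
  fix m
  have "c \<le> Gam m / g $ i $ m" using assms order_trans by (auto simp: is_argmin_ratio_iff)
  hence "g $ i $ m * c \<le> Gam m" using g_pos[of i m] by (simp add: pos_le_divide_eq mult.commute)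
  thus "(\<Sum>k\<in>UNIV. g $ k $ m * single i c k) \<le> Gam m" by (simp only: sum_mult_single)
qed (use assms(2) in \<open>simp add: single_def\<close>)

lemma optimal_if_condA:
  assumes argmin: "is_argmin_ratio g Gam i m'" and A: "condA h g lam Gam i m'"
  shows "optimal h g lam Gam (single i (max 0 (1 / lam i - 1 / h $ i)))"
proof -
  define c where "c = max 0 (1 / lam i - 1 / h $ i)"
  define p where "p = single i c"
  from A have lam_i: "lam i > 0" and below_cap: "1 / lam i - 1 / h $ i \<le> Gam m' / g $ i $ m'"
    and ratio: "\<And>j. h $ j * lam i \<le> lam j * h $ i"
    by (auto simp: condA_iff)
  have h_i: "h $ i > 0" by (rule h_pos)
  have s: "signal h p = 1 + h $ i * c" by (simp add: p_def signal_single)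
  have s_ge: "signal h p \<ge> h $ i / lam i"
  proof (cases "1 / lam i - 1 / h $ i \<le> 0")
    case True
    hence "h $ i \<le> lam i" using lam_i h_i by (simp add: divide_simps)
    thus ?thesis using True lam_i by (simp add: s c_def)
  next
    case False
    thus ?thesis using lam_i h_i by (simp add: s c_def field_simps)
  qed
  have s_pos: "signal h p > 0" using s_ge lam_i h_i by (smt (verit) divide_pos_pos)
  have marginal_nonpos: "marginal h lam p k \<le> 0" for k
  proof -
    have "h $ k / signal h p \<le> h $ k / (h $ i / lam i)"
      using s_ge s_pos h_pos[of k] lam_i h_i by (intro divide_left_mono) (auto intro: mult_pos_pos)
    also have "\<dots> \<le> lam k" using ratio[of k] h_i by (simp add: divide_simps)
    finally show ?thesis by (simp add: marginal_def)
  qed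
  have compl: "p k * marginal h lam p k = 0" for k
  proof (cases "k = i \<and> 1 / lam i - 1 / h $ i > 0")
    case True
    hence "signal h p = h $ i / lam i" using lam_i h_i by (simp add: s c_def field_simps)
    thus ?thesis using True lam_i h_i by (simp add: marginal_def)
  qed (auto simp: p_def c_def single_def)
  have "0 < Gam m' / g $ i $ m'" using Gam_pos g_pos by simp
  hence feas: "feasible g Gam p"
    unfolding p_def using below_cap by (intro feasible_single[OF argmin]) (auto simp: c_def)
  show ?thesis unfolding c_def[symmetric] p_def[symmetric]
    by (rule optimal_if_kkt[where \<nu> = 0 and m = m'])
      (use h_nonneg feas marginal_nonpos compl in auto)
qed

lemma optimal_if_condB:
  assumes argmin: "is_argmin_ratio g Gam i m'" and B: "condB h g lam Gam i m'"
  shows "optimal h g lam Gam (single i (Gam m' / g $ i $ m'))"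
proof -
  define G where "G = g $ i $ m'"
  define p where "p = single i (Gam m' / G)"
  have G_pos: "G > 0" using g_pos by (simp add: G_def)
  from B have marginal_i: "marginal h lam p i > 0"
    and tradeoff: "\<And>j. marginal h lam p j * G \<le> marginal h lam p i * g $ j $ m'"
    by (auto simp: condB_iff_marginal p_def G_def)
  have feas: "feasible g Gam p"
    unfolding p_def G_def using Gam_pos[of m'] g_pos[of i m']
    by (intro feasible_single[OF argmin]) simp_all
  show ?thesis unfolding G_def[symmetric] p_def[symmetric]
  proof (rule optimal_if_kkt[where \<nu> = "marginal h lam p i / G" and m = m'])
    show "marginal h lam p k \<le> marginal h lam p i / G * g $ k $ m'" for k
      using tradeoff[of k] G_pos by (simp add: pos_le_divide_eq mult.commute)
    show "p k * marginal h lam p k = p k * (marginal h lam p i / G * g $ k $ m')" for k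
      using G_pos by (simp add: p_def single_def G_def)
    show "marginal h lam p i / G * (\<Sum>k\<in>UNIV. g $ k $ m' * p k) = marginal h lam p i / G * Gam m'"
      using G_pos by (simp add: p_def sum_mult_single G_def)
  qed (use h_nonneg feas marginal_i G_pos in auto)
qed

lemma marginal_nonpos_if_slack:
  assumes opt: "optimal h g lam Gam p" and slack: "\<And>m. (\<Sum>k\<in>UNIV. g $ k $ m * p k) < Gam m"
  shows "marginal h lam p j \<le> 0"
proof -
  have "admissible_dir g Gam p (single j 1)"
    using slack by (simp add: admissible_dir_def single_def)
  from marginal_dir_nonpos_if_optimal[OF h_nonneg opt this] show ?thesis
    by (simp add: sum_mult_single)
qed

lemma marginal_nonneg_if_active:
  assumes opt: "optimal h g lam Gam p" and "p i > 0"
  shows "marginal h lam p i \<ge> 0"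
proof -
  have "admissible_dir g Gam p (single i (-1))"
    unfolding admissible_dir_def sum_mult_single
    using \<open>p i > 0\<close> g_pos by (auto simp: single_def less_imp_le)
  from marginal_dir_nonpos_if_optimal[OF h_nonneg opt this] show ?thesis
    by (simp add: sum_mult_single)
qed

text \<open>Exchanging one unit of power of user j against g_jm'/g_im' units of power of user i
  leaves the interference at the binding receiver m' unchanged.\<close>
lemma marginal_tradeoff_if_optimal_on_cap:
  assumes opt: "optimal h g lam Gam (single i (Gam m' / g $ i $ m'))" (is "optimal _ _ _ _ ?p")
    and unique: "\<And>m. m \<noteq> m' \<Longrightarrow> Gam m' / g $ i $ m' < Gam m / g $ i $ m"
  shows "marginal h lam ?p j * g $ i $ m' \<le> marginal h lam ?p i * g $ j $ m'"
proof -
  define G where "G = g $ i $ m'"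
  define d where "d = (\<lambda>k. single j 1 k + single i (- g $ j $ m' / G) k)"
  have G_pos: "G > 0" using g_pos by (simp add: G_def)
  have "?p i > 0" using Gam_pos[of m'] g_pos[of i m'] by (simp add: single_def)
  hence "d k \<ge> 0 \<or> ?p k > 0" for k by (cases "k = i") (simp_all add: d_def single_def)
  moreover have "(\<Sum>k\<in>UNIV. g $ k $ m * ?p k) < Gam m \<or> (\<Sum>k\<in>UNIV. g $ k $ m * d k) \<le> 0" for m
  proof (cases "m = m'")
    case True
    then show ?thesis using G_pos by (simp add: d_def sum_mult_single_add G_def)
  next
    case False
    then show ?thesis using unique[OF False] g_pos[of i m]
      by (simp add: sum_mult_single pos_less_divide_eq mult.commute)
  qed
  ultimately have "admissible_dir g Gam ?p d" by (simp add: admissible_dir_def)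
  from marginal_dir_nonpos_if_optimal[OF h_nonneg opt this]
  have "marginal h lam ?p j \<le> marginal h lam ?p i * g $ j $ m' / G"
    by (simp add: d_def sum_mult_single_add)
  thus ?thesis using G_pos by (simp add: pos_le_divide_eq G_def)
qed

lemma condA_if_marginal_zero:
  assumes argmin: "is_argmin_ratio g Gam i m'" and "0 \<le> c" and below_cap: "c \<le> Gam m' / g $ i $ m'"
    and zero: "marginal h lam (single i c) i = 0"
    and nonpos: "\<And>j. marginal h lam (single i c) j \<le> 0"
  shows "condA h g lam Gam i m'"
proof -
  let ?s = "signal h (single i c)"
  have h_i: "h $ i > 0" by (rule h_pos)
  have s_pos: "?s > 0" using h_i \<open>0 \<le> c\<close> by (simp add: signal_single add_pos_nonneg)
  have lam_i: "lam i = h $ i / ?s" using zero by (simp add: marginal_def)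
  have "1 / lam i - 1 / h $ i = c" using lam_i h_i by (simp add: signal_single field_simps)
  moreover have "h $ j * lam i \<le> lam j * h $ i" for j
  proof -
    have "h $ j * lam i / h $ i = h $ j / ?s" using lam_i h_i by simp
    also have "\<dots> \<le> lam j" using nonpos[of j] by (simp add: marginal_def)
    finally show ?thesis using h_i by (simp add: pos_divide_le_eq)
  qed
  moreover have "lam i > 0" using lam_i h_i s_pos by simp
  ultimately show ?thesis using below_cap by (simp add: condA_iff)
qed

lemma condA_if_optimal_zero:
  assumes opt: "optimal h g lam Gam (\<lambda>_. 0)"
  shows "\<exists>i m'. is_argmin_ratio g Gam i m' \<and> condA h g lam Gam i m'"
proof -
  have h_le: "h $ k \<le> lam k" for k
    using marginal_nonpos_if_slack[OF opt, of k] Gam_pos by (simp add: marginal_def signal_def)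
  define i where "i = arg_min_on (\<lambda>j. lam j / h $ j) UNIV"
  have ratio: "h $ j * lam i \<le> lam j * h $ i" for j
  proof -
    have "lam i / h $ i \<le> lam j / h $ j" unfolding i_def by (rule arg_min_least) auto
    thus ?thesis using h_pos[of i] h_pos[of j] by (simp add: divide_simps mult.commute)
  qed
  have lam_i: "lam i > 0" using h_le[of i] h_pos[of i] by linarith
  obtain m' where argmin: "is_argmin_ratio g Gam i m'" using ex_argmin_ratio by blast
  have "1 / lam i - 1 / h $ i \<le> 0" using h_le[of i] h_pos[of i] by (simp add: frac_le)
  also have "0 \<le> Gam m' / g $ i $ m'" using Gam_pos[of m'] g_pos[of i m'] by simp
  finally show ?thesis using argmin lam_i ratio by (auto simp: condA_iff)
qed

lemma condA_if_optimal_below_cap: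
  assumes argmin: "is_argmin_ratio g Gam i m'" and opt: "optimal h g lam Gam (single i c)"
    and "0 < c" and "c < Gam m' / g $ i $ m'"
  shows "condA h g lam Gam i m'"
proof -
  have slack: "(\<Sum>k\<in>UNIV. g $ k $ m * single i c k) < Gam m" for m
  proof -
    have "c < Gam m / g $ i $ m"
      using assms(4) argmin by (auto simp: is_argmin_ratio_iff intro: order_less_le_trans)
    hence "g $ i $ m * c < Gam m" using g_pos[of i m] by (simp add: pos_less_divide_eq mult.commute)
    thus ?thesis by (simp only: sum_mult_single)
  qed
  have nonpos: "marginal h lam (single i c) j \<le> 0" for j
    by (rule marginal_nonpos_if_slack[OF opt slack])
  moreover have "marginal h lam (single i c) i \<ge> 0"
    using \<open>0 < c\<close> by (intro marginal_nonneg_if_active[OF opt]) (simp add: single_def)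
  ultimately show ?thesis
    using assms(3,4) by (intro condA_if_marginal_zero[OF argmin, of c]) (auto intro: order_antisym)
qed

lemma condA_or_condB_if_optimal_on_cap:
  assumes argmin: "is_argmin_ratio g Gam i m'"
    and unique: "\<And>m. m \<noteq> m' \<Longrightarrow> Gam m' / g $ i $ m' \<noteq> Gam m / g $ i $ m"
    and opt: "optimal h g lam Gam (single i (Gam m' / g $ i $ m'))" (is "optimal _ _ _ _ ?p")
  shows "condA h g lam Gam i m' \<or> condB h g lam Gam i m'"
proof -
  have cap_pos: "Gam m' / g $ i $ m' > 0" using Gam_pos[of m'] g_pos[of i m'] by simp
  have marginal_i: "marginal h lam ?p i \<ge> 0"
    using cap_pos by (intro marginal_nonneg_if_active[OF opt]) (simp add: single_def)
  have tradeoff: "marginal h lam ?p j * g $ i $ m' \<le> marginal h lam ?p i * g $ j $ m'" for j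
    using argmin unique
    by (intro marginal_tradeoff_if_optimal_on_cap[OF opt]) (auto simp: is_argmin_ratio_iff order_le_less)
  show ?thesis
  proof (cases "marginal h lam ?p i = 0")
    case True
    have "marginal h lam ?p j \<le> 0" for j
      using tradeoff[of j] True g_pos[of i m'] by (simp add: mult_le_0_iff)
    hence "condA h g lam Gam i m'"
      using cap_pos True by (intro condA_if_marginal_zero[OF argmin]) auto
    thus ?thesis ..
  next
    case False
    hence "condB h g lam Gam i m'" using marginal_i tradeoff by (simp add: condB_iff_marginal)
    thus ?thesis ..
  qed
qed

lemma condA_or_condB_if_optimal:
  assumes unique: "\<And>k m n. m \<noteq> n \<Longrightarrow> Gam n * g $ k $ m \<noteq> Gam m * g $ k $ n"
    and opt: "optimal h g lam Gam p" and card: "card {k. p k > 0} \<le> 1"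
  shows "\<exists>i m'. is_argmin_ratio g Gam i m' \<and> (condA h g lam Gam i m' \<or> condB h g lam Gam i m')"
proof (cases "\<forall>k. p k = 0")
  case True
  hence "p = (\<lambda>_. 0)" by auto
  then show ?thesis using condA_if_optimal_zero opt by blast
next
  case False
  have p_nonneg: "p k \<ge> 0" for k using opt by (simp add: optimal_def feasible_def)
  then obtain i where p_i: "p i > 0" using False by (metis order_le_less)
  obtain m' where argmin: "is_argmin_ratio g Gam i m'" using ex_argmin_ratio by blast
  have p: "p = single i (p i)" by (rule single_if_card_pos_le_1[OF p_nonneg card p_i])
  have "g $ i $ m' * p i \<le> Gam m'"
    using opt p by (metis optimal_def feasible_def sum_mult_single)
  hence "p i \<le> Gam m' / g $ i $ m'" using g_pos[of i m'] by (simp add: pos_le_divide_eq mult.commute)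
  then consider "p i < Gam m' / g $ i $ m'" | "p i = Gam m' / g $ i $ m'" by linarith
  then show ?thesis
  proof cases
    case 1
    then show ?thesis using condA_if_optimal_below_cap[OF argmin] opt p p_i argmin by metis
  next
    case 2
    have "Gam m' / g $ i $ m' \<noteq> Gam m / g $ i $ m" if "m \<noteq> m'" for m
      using unique[OF that, of i] g_pos[of i m] g_pos[of i m'] by (auto simp: field_simps)
    then show ?thesis using condA_or_condB_if_optimal_on_cap[OF argmin] opt p 2 argmin by metis
  qed
qed

lemma single_user_optimality:
  assumes unique: "\<And>k m n. m \<noteq> n \<Longrightarrow> Gam n * g $ k $ m \<noteq> Gam m * g $ k $ n"
  shows "((\<exists>p. optimal h g lam Gam p \<and> card {k. p k > 0} \<le> 1) \<longleftrightarrow>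
        (\<exists>i m'. is_argmin_ratio g Gam i m' \<and> (condA h g lam Gam i m' \<or> condB h g lam Gam i m')))
     \<and> (\<forall>i m'. is_argmin_ratio g Gam i m' \<and> condA h g lam Gam i m' \<longrightarrow>
          optimal h g lam Gam (single i (max 0 (1 / lam i - 1 / h $ i))))
     \<and> (\<forall>i m'. is_argmin_ratio g Gam i m' \<and> condB h g lam Gam i m' \<longrightarrow>
          optimal h g lam Gam (single i (Gam m' / g $ i $ m')))"
  using condA_or_condB_if_optimal[OF unique] optimal_if_condA optimal_if_condB card_pos_single_le_1
  by blast

end

lemma AE_inner_neq_0_if_absolutely_continuous:
  fixes \<mu> :: "'a::euclidean_space measure"
  assumes "absolutely_continuous lborel \<mu>" and "a \<noteq> 0"
  shows "AE x in \<mu>. a \<bullet> x \<noteq> 0"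
proof -
  have "{x. a \<bullet> x = 0} \<in> null_sets lebesgue"
    using negligible_hyperplane[of a 0] assms(2) by (simp add: negligible_iff_null_sets)
  moreover have "{x::'a. a \<bullet> x = 0} \<in> sets lborel" by (simp add: borel_closed closed_hyperplane)
  ultimately have "{x. a \<bullet> x = 0} \<in> null_sets lborel" using null_sets_completion_iff by blast
  hence "{x. a \<bullet> x = 0} \<in> null_sets \<mu>" using assms(1) by (auto simp: absolutely_continuous_def)
  from AE_not_in[OF this] show ?thesis by simp
qed

lemma AE_generic_channel:
  fixes \<mu> :: "((real^'k::finite) \<times> (real^'m::finite^'k)) measure"
  assumes ac: "absolutely_continuous lborel \<mu>" and Gam_pos: "\<And>m. Gam m > 0"
  shows "AE \<alpha> in \<mu>. (\<forall>k. fst \<alpha> $ k \<noteq> 0) \<and> (\<forall>k m. snd \<alpha> $ k $ m \<noteq> 0) \<and>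
    (\<forall>k m n. m \<noteq> n \<longrightarrow> Gam n * snd \<alpha> $ k $ m \<noteq> Gam m * snd \<alpha> $ k $ n)"
proof -
  have h_coord: "(axis k 1, 0) \<bullet> \<alpha> = fst \<alpha> $ k" for k and \<alpha> :: "(real^'k) \<times> (real^'m^'k)"
    by (cases \<alpha>) (simp add: inner_axis')
  have g_coord: "(0, axis k (axis m 1)) \<bullet> \<alpha> = snd \<alpha> $ k $ m"
    for k m and \<alpha> :: "(real^'k) \<times> (real^'m^'k)"
    by (cases \<alpha>) (simp add: inner_axis')
  have ratio_coord: "(0, axis k (axis m a - axis n b)) \<bullet> \<alpha> = a * snd \<alpha> $ k $ m - b * snd \<alpha> $ k $ n"
    for k m n a b and \<alpha> :: "(real^'k) \<times> (real^'m^'k)"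
    by (cases \<alpha>) (simp add: inner_axis' inner_diff_left)
  have "AE \<alpha> in \<mu>. fst \<alpha> $ k \<noteq> 0" for k
    using AE_inner_neq_0_if_absolutely_continuous[OF ac, of "(axis k 1, 0)"]
    by (simp add: h_coord zero_prod_def axis_eq_0_iff)
  moreover have "AE \<alpha> in \<mu>. snd \<alpha> $ k $ m \<noteq> 0" for k m
    using AE_inner_neq_0_if_absolutely_continuous[OF ac, of "(0, axis k (axis m 1))"]
    by (simp add: g_coord zero_prod_def axis_eq_0_iff)
  moreover have "AE \<alpha> in \<mu>. m \<noteq> n \<longrightarrow> Gam n * snd \<alpha> $ k $ m \<noteq> Gam m * snd \<alpha> $ k $ n"
    for k m n
  proof (cases "m = n")
    case False
    have "(axis m (Gam n) - axis n (Gam m)) $ m = Gam n"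
      using False by (simp add: axis_def)
    hence "axis m (Gam n) - axis n (Gam m) \<noteq> 0" by (metis Gam_pos less_irrefl zero_index)
    hence "(0, axis k (axis m (Gam n) - axis n (Gam m))) \<noteq> (0 :: (real^'k) \<times> (real^'m^'k))"
      by (simp add: zero_prod_def axis_eq_0_iff)
    from AE_inner_neq_0_if_absolutely_continuous[OF ac this] show ?thesis by (simp add: ratio_coord)
  qed simp
  ultimately show ?thesis by (simp add: AE_all_countable)
qed

theorem theorem3p2:
  fixes \<mu> :: "((real^'k::finite) \<times> (real^'m::finite^'k)) measure"
    and lam :: "'k \<Rightarrow> real" and Gam :: "'m \<Rightarrow> real"
  assumes "prob_space \<mu>"
    and "sets \<mu> = sets borel"
    and "absolutely_continuous lborel \<mu>"
    and "AE \<alpha> in \<mu>. (\<forall>k. fst \<alpha> $ k \<ge> 0) \<and> (\<forall>k m. snd \<alpha> $ k $ m \<ge> 0)"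
    and "\<forall>k. lam k \<ge> 0"
    and "\<forall>m. Gam m > 0"
  shows "AE \<alpha> in \<mu>. (case \<alpha> of (h, g) \<Rightarrow>
     ((\<exists>p. optimal h g lam Gam p \<and> card {k. p k > 0} \<le> 1) \<longleftrightarrow>
        (\<exists>i m'. is_argmin_ratio g Gam i m' \<and> (condA h g lam Gam i m' \<or> condB h g lam Gam i m')))
     \<and> (\<forall>i m'. is_argmin_ratio g Gam i m' \<and> condA h g lam Gam i m' \<longrightarrow>
          optimal h g lam Gam (single i (max 0 (1 / lam i - 1 / h $ i))))
     \<and> (\<forall>i m'. is_argmin_ratio g Gam i m' \<and> condB h g lam Gam i m' \<longrightarrow>
          optimal h g lam Gam (single i (Gam m' / g $ i $ m'))))"
proof -
  have "\<And>m. Gam m > 0" using assms(6) by blast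
  note generic = AE_generic_channel[where Gam = Gam, OF assms(3) this]
  show ?thesis using assms(4) generic
  proof eventually_elim
    case (elim \<alpha>)
    obtain h g where \<alpha>: "\<alpha> = (h, g)" by fastforce
    interpret positive_channel h g lam Gam
      using elim assms(5,6) by unfold_locales (auto simp: \<alpha> order_le_less)
    show ?case using single_user_optimality elim by (simp add: \<alpha>)
  qed
qed

end
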